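(* There exists a Heffter array $H(n;k)$ for all $n\equiv 2\pmod 4$ with $n\ge 6$ and all $k\equiv 1\pmod 4$ with $5\le k<n$.
   Context: A Heffter array $H(n;k)$ is an $n\times n$ array in which some cells are filled with nonzero integers and the others are empty, such that: each row and each column contains exactly $k$ filled cells; the entries of every row and of every column sum to $0$ modulo $2nk+1$; and for each integer $1\le x\le nk$, exactly one of $x$ or $-x$ appears in the array, and it appears exactly once. *)

theory Defs
  imports Main
begin

text \<open>A partially filled n x n array: rows and columns indexed by 0..n-1;
  A i j = None means the cell (i,j) is empty, A i j = Some v means it contains v.\<close>

definition heffter :: "nat \<Rightarrow> nat \<Rightarrow> (nat \<Rightarrow> nat \<Rightarrow> int option) \<Rightarrow> bool" where
  "heffter n k A \<longleftrightarrow>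
     (\<forall>i j. (i \<ge> n \<or> j \<ge> n) \<longrightarrow> A i j = None) \<and>
     (\<forall>i<n. \<forall>j<n. \<forall>v. A i j = Some v \<longrightarrow> v \<noteq> 0) \<and>
     (\<forall>i<n. card {j. j < n \<and> A i j \<noteq> None} = k) \<and>
     (\<forall>j<n. card {i. i < n \<and> A i j \<noteq> None} = k) \<and>
     (\<forall>i<n. (\<Sum>j\<in>{j. j < n \<and> A i j \<noteq> None}. the (A i j)) mod (2 * int n * int k + 1) = 0) \<and>
     (\<forall>j<n. (\<Sum>i\<in>{i. i < n \<and> A i j \<noteq> None}. the (A i j)) mod (2 * int n * int k + 1) = 0) \<and>
     (\<forall>x::int. 1 \<le> x \<and> x \<le> int n * int k \<longrightarrow>
        (\<exists>!p. fst p < n \<and> snd p < n \<and>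
              (A (fst p) (snd p) = Some x \<or> A (fst p) (snd p) = Some (- x))))"

end

theory Submission
  imports Defs
begin

text \<open>With n = 2m and k = 4T + 1, the array is built from 2 \<times> 2 blocks placed block-circulantly
  on the block diagonals 0, ..., 2T of an m \<times> m block matrix (diagonal 2 holding only the two
  diagonal cells of its blocks), so every row and column meets 4T + 1 filled cells.
  Diagonals 3, ..., 2T carry consecutive quadruples x, x+1, x+2, x+3 with signs arranged so that
  each block contributes \<plusminus>1 to its rows and \<plusminus>2 to its columns; the sign alternates with the
  diagonal, so these contributions cancel in pairs.  Diagonals 0, 1, 2 carry the values 1, ..., 8m
  and the top 2m values; block row I of diagonal 1 uses the index of block row I - 1, which makes
  every row and column sum of these three diagonals equal to 0 or -(2nk + 1).  Finally every value
  1, ..., nk occurs up to sign, and since there are exactly nk filled cells it occurs exactly once.\<close>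

lemma sum_lessThan_mult_blocks:
  fixes g :: "nat \<Rightarrow> 'a::comm_monoid_add"
  shows "(\<Sum>j<s*m. g j) = (\<Sum>J<m. \<Sum>c<s. g (s*J + c))"
proof -
  have "(\<Sum>c<s. g (s*J + c)) = sum g {J*s..<J*s+s}" for J
    using sum.shift_bounds_nat_ivl[of g 0 "J*s" s] by (simp add: atLeast0LessThan ac_simps)
  then show ?thesis using sum.nat_group[of g s m] by (simp add: mult.commute)
qed

lemma sum_neg_one_power_odd_even:
  "(\<Sum>i = Suc (2*a)..2*b. (-1::'a::ring_1) ^ i) = 0"
  by (induction b) (auto simp: not_less_eq_eq)

lemma sum_lessThan_split_ivl:
  fixes g :: "nat \<Rightarrow> 'a::comm_monoid_add"
  assumes "a \<le> Suc b" "b < m" "\<And>d. b < d \<Longrightarrow> d < m \<Longrightarrow> g d = 0"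
  shows "(\<Sum>d<m. g d) = (\<Sum>d<a. g d) + (\<Sum>d = a..b. g d)"
proof -
  have "(\<Sum>d<m. g d) = (\<Sum>d<Suc b. g d)"
    by (rule sum.mono_neutral_right) (use assms in auto)
  also have "\<dots> = (\<Sum>d<a. g d) + (\<Sum>d = a..b. g d)"
    using assms(1) by (metis atLeastLessThanSuc_atLeastAtMost lessThan_atLeast0 sum.atLeastLessThan_concat zero_le)
  finally show ?thesis .
qed

lemma sum_filter_lessThan:
  "(\<Sum>j\<in>{j. j < n \<and> P j}. g j) = (\<Sum>j<(n::nat). if P j then g j else 0)"
proof -
  have "{j. j < n \<and> P j} = {j \<in> {..<n}. P j}" by auto
  also have "sum g \<dots> = (\<Sum>j<n. if P j then g j else 0)" by (rule sum.inter_filter) simp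
  finally show ?thesis .
qed

lemma card_filter_lessThan: "card {j. j < n \<and> P j} = (\<Sum>j<(n::nat). if P j then 1 else 0)"
  unfolding card_eq_sum sum_filter_lessThan ..

lemma if_neg_mod_self: "(if b then - x else 0) mod x = (0::int)"
  by simp

lemma mod_add_sub_cancel: "I < m \<Longrightarrow> d < m \<Longrightarrow> ((I + d) mod m + m - I) mod m = (d::nat)"
  by (cases "I + d < m") (auto simp: mod_if)

lemma mod_sub_add_cancel: "J < m \<Longrightarrow> d < m \<Longrightarrow> (d + (J + m - d) mod m) mod m = (J::nat)"
  by (cases "d \<le> J") (auto simp: mod_if)

lemma mod_sub_sub_cancel: "J < m \<Longrightarrow> d < m \<Longrightarrow> (J + m - (J + m - d) mod m) mod m = (d::nat)"
  by (cases "d \<le> J") (auto simp: mod_if)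

lemma mod_pred_pred:
  assumes "2 \<le> m" "J < m"
  shows "((J + m - 1) mod m + m - 1) mod m = (J + m - 2) mod (m::nat)"
proof -
  have "((J + m - 1) mod m + m - 1) mod m = ((J + m - 1) mod m + (m - 1)) mod m"
    using assms by simp
  also have "\<dots> = (J + m - 1 + (m - 1)) mod m"
    by (simp add: mod_add_left_eq)
  also have "J + m - 1 + (m - 1) = (J + m - 2) + m"
    using assms by simp
  finally show ?thesis by simp
qed

lemma exists_mod_pred:
  assumes "u < m"
  obtains I where "I < m" "(I + m - 1) mod m = (u::nat)"
proof
  show "(u + 1) mod m < m" "((u + 1) mod m + m - 1) mod m = u"
    using assms by (auto simp: mod_if)
qed

lemma exists_lessThan_diff:
  assumes "(a - 1) * int m < x" "x \<le> a * int m"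
  obtains I where "I < m" "x = a * int m - int I"
proof
  show "nat (a * int m - x) < m" "x = a * int m - int (nat (a * int m - x))"
    using assms by (auto simp: algebra_simps)
qed

lemma bij_betw_rotate_lessThan:
  assumes "I < m"
  shows "bij_betw (\<lambda>J. (J + m - I) mod m) {..<m} {..<(m::nat)}"
  by (rule bij_betw_byWitness[where f' = "\<lambda>d. (I + d) mod m"])
    (use assms in \<open>auto simp: mod_add_sub_cancel mod_sub_add_cancel\<close>)

lemma bij_betw_reflect_lessThan:
  assumes "J < m"
  shows "bij_betw (\<lambda>d. (J + m - d) mod m) {..<m} {..<(m::nat)}"
  by (rule bij_betw_byWitness[where f' = "\<lambda>d. (J + m - d) mod m"])
    (use assms in \<open>auto simp: mod_sub_sub_cancel\<close>)

lemma heffterI: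
  fixes A :: "nat \<Rightarrow> nat \<Rightarrow> int option"
  assumes outside: "\<And>i j. n \<le> i \<or> n \<le> j \<Longrightarrow> A i j = None"
    and row_card: "\<And>i. i < n \<Longrightarrow> card {j. j < n \<and> A i j \<noteq> None} = k"
    and col_card: "\<And>j. j < n \<Longrightarrow> card {i. i < n \<and> A i j \<noteq> None} = k"
    and row_sum: "\<And>i. i < n \<Longrightarrow>
      (\<Sum>j\<in>{j. j < n \<and> A i j \<noteq> None}. the (A i j)) mod (2 * int n * int k + 1) = 0"
    and col_sum: "\<And>j. j < n \<Longrightarrow>
      (\<Sum>i\<in>{i. i < n \<and> A i j \<noteq> None}. the (A i j)) mod (2 * int n * int k + 1) = 0"
    and covering: "\<And>x. 1 \<le> x \<Longrightarrow> x \<le> int n * int k \<Longrightarrow>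
      \<exists>i<n. \<exists>j<n. \<exists>v. A i j = Some v \<and> \<bar>v\<bar> = x"
  shows "heffter n k A"
proof -
  define F where "F = {p. fst p < n \<and> snd p < n \<and> A (fst p) (snd p) \<noteq> None}"
  define g where "g p = \<bar>the (A (fst p) (snd p))\<bar>" for p
  have F_Sigma: "F = Sigma {..<n} (\<lambda>i. {j. j < n \<and> A i j \<noteq> None})" by (auto simp: F_def)
  have fin: "finite F" by (simp add: F_Sigma)
  have "card F = (\<Sum>i<n. card {j. j < n \<and> A i j \<noteq> None})" by (simp add: F_Sigma card_SigmaI)
  also have "\<dots> = (\<Sum>i<n. k)" by (intro sum.cong refl row_card) simp
  also have "\<dots> = n * k" by simp
  finally have "card F = n * k" .
  then have card_values: "card {1..int n * int k} = card F" by (simp flip: of_nat_mult)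
  have abs_onto: "{1..int n * int k} \<subseteq> g ` F"
  proof
    fix x assume "x \<in> {1..int n * int k}"
    then obtain i j v where "i < n" "j < n" "A i j = Some v" "\<bar>v\<bar> = x"
      using covering by (meson atLeastAtMost_iff)
    then show "x \<in> g ` F" by (auto simp: F_def g_def intro!: image_eqI[of _ _ "(i, j)"])
  qed
  have card_image: "card (g ` F) = card F"
    using card_mono[OF finite_imageI[OF fin] abs_onto] card_image_le[OF fin, of g] card_values by simp
  then have inj: "inj_on g F" by (rule eq_card_imp_inj_on[OF fin])
  have "0 \<notin> g ` F"
  proof
    assume "0 \<in> g ` F"
    with abs_onto have "insert 0 {1..int n * int k} \<subseteq> g ` F" by blast
    from card_mono[OF finite_imageI[OF fin] this] show False using card_image card_values by simp
  qed
  have nonzero: "v \<noteq> 0" if "i < n" "j < n" "A i j = Some v" for i j v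
  proof
    assume "v = 0"
    with that have "(i, j) \<in> F" "g (i, j) = 0" by (simp_all add: F_def g_def)
    with \<open>0 \<notin> g ` F\<close> show False by force
  qed
  have unique: "\<exists>!p. fst p < n \<and> snd p < n \<and> (A (fst p) (snd p) = Some x \<or> A (fst p) (snd p) = Some (- x))"
    if x: "1 \<le> x \<and> x \<le> int n * int k" for x
  proof -
    obtain p where p: "p \<in> F" "g p = x" using abs_onto x by fastforce
    show ?thesis
    proof (rule ex1I[of _ p])
      show "fst p < n \<and> snd p < n \<and> (A (fst p) (snd p) = Some x \<or> A (fst p) (snd p) = Some (- x))"
        using p by (auto simp: F_def g_def abs_if split: if_splits)
    next
      fix q assume "fst q < n \<and> snd q < n \<and> (A (fst q) (snd q) = Some x \<or> A (fst q) (snd q) = Some (- x))"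
      then have "q \<in> F" "g q = g p" using p x by (auto simp: F_def g_def)
      then show "q = p" using inj p(1) by (auto dest: inj_onD)
    qed
  qed
  show ?thesis
    unfolding heffter_def using outside row_card col_card row_sum col_sum nonzero unique
    by fast
qed

lemma mult_block_less:
  assumes "I < m" "r < s"
  shows "s*I + r < s*(m::nat)"
proof -
  have "s*I + r < s*I + s" using \<open>r < s\<close> by simp
  also have "\<dots> = s * Suc I" by simp
  also have "\<dots> \<le> s*m" using \<open>I < m\<close> by (intro mult_le_mono2) simp
  finally show ?thesis .
qed

text \<open>The s \<times> s block in block row I and block column J is B I d, where d = (J - I) mod m
  numbers its block diagonal.\<close>

definition block_circulant ::
  "nat \<Rightarrow> nat \<Rightarrow> (nat \<Rightarrow> nat \<Rightarrow> nat \<Rightarrow> nat \<Rightarrow> 'a option) \<Rightarrow> nat \<Rightarrow> nat \<Rightarrow> 'a option" where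
  "block_circulant s m B i j =
     (if i < s*m \<and> j < s*m then B (i div s) ((j div s + m - i div s) mod m) (i mod s) (j mod s) else None)"

lemma block_circulant_block:
  assumes "I < m" "d < m" "r < s" "c < s"
  shows "block_circulant s m B (s*I + r) (s*((I + d) mod m) + c) = B I d r c"
proof -
  have "s*I + r < s*m" "s*((I + d) mod m) + c < s*m"
    using assms by (auto intro!: mult_block_less)
  then show ?thesis using assms by (simp add: block_circulant_def mod_add_sub_cancel)
qed

lemma block_circulant_in_row:
  assumes "i < s*m" "J < m" "c < s"
  shows "block_circulant s m B i (s*J + c) = B (i div s) ((J + m - i div s) mod m) (i mod s) c"
  using assms mult_block_less[OF assms(2,3)] by (simp add: block_circulant_def)

lemma block_circulant_in_col:
  assumes "j < s*m" "I < m" "r < s"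
  shows "block_circulant s m B (s*I + r) j = B I ((j div s + m - I) mod m) r (j mod s)"
  using assms mult_block_less[OF assms(2,3)] by (simp add: block_circulant_def)

lemma sum_block_circulant_row:
  assumes "i < s*m"
  shows "(\<Sum>j<s*m. f (block_circulant s m B i j)) = (\<Sum>d<m. \<Sum>c<s. f (B (i div s) d (i mod s) c))"
proof -
  have I: "i div s < m" using assms by (simp add: less_mult_imp_div_less mult.commute)
  have "(\<Sum>j<s*m. f (block_circulant s m B i j))
      = (\<Sum>J<m. \<Sum>c<s. f (B (i div s) ((J + m - i div s) mod m) (i mod s) c))"
    by (simp add: sum_lessThan_mult_blocks block_circulant_in_row[OF assms])
  also have "\<dots> = (\<Sum>d<m. \<Sum>c<s. f (B (i div s) d (i mod s) c))"
    by (rule sum.reindex_bij_betw[OF bij_betw_rotate_lessThan[OF I]])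
  finally show ?thesis .
qed

lemma sum_block_circulant_col:
  assumes "j < s*m"
  shows "(\<Sum>i<s*m. f (block_circulant s m B i j))
       = (\<Sum>d<m. \<Sum>r<s. f (B ((j div s + m - d) mod m) d r (j mod s)))"
proof -
  have J: "j div s < m" using assms by (simp add: less_mult_imp_div_less mult.commute)
  have "(\<Sum>i<s*m. f (block_circulant s m B i j))
      = (\<Sum>I<m. \<Sum>r<s. f (B I ((j div s + m - I) mod m) r (j mod s)))"
    by (simp add: sum_lessThan_mult_blocks block_circulant_in_col[OF assms])
  also have "\<dots> = (\<Sum>d<m. \<Sum>r<s. f (B ((j div s + m - d) mod m) d r (j mod s)))"
    using sum.reindex_bij_betw[OF bij_betw_reflect_lessThan[OF J],
        of "\<lambda>I. \<Sum>r<s. f (B I ((j div s + m - I) mod m) r (j mod s))"]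
    by (simp add: mod_sub_sub_cancel J)
  finally show ?thesis .
qed

definition mat2 :: "'a \<Rightarrow> 'a \<Rightarrow> 'a \<Rightarrow> 'a \<Rightarrow> nat \<Rightarrow> nat \<Rightarrow> 'a" where
  "mat2 a b a' b' r c = (if r = 0 then if c = 0 then a else b else if c = 0 then a' else b')"

text \<open>Entry (r, c) of the block on block diagonal d in block row I, for n = 2m and k = 4T + 1;
  N = nk, and u is the block row preceding I.\<close>

definition heffter_block :: "nat \<Rightarrow> nat \<Rightarrow> nat \<Rightarrow> nat \<Rightarrow> nat \<Rightarrow> nat \<Rightarrow> int option" where
  "heffter_block m T I d r c =
     (let N = int (2*m*(4*T+1)); M = int m; i = int I; u = int ((I + m - 1) mod m) in
      if d = 0 then Some (mat2 (i - N) (i - 5*M) (8*M - i) (M - i) r c)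
      else if d = 1 then Some (mat2 (u + M - N) (6*M - u) (u - 7*M) (2*M - u) r c)
      else if d = 2 then (if r = c then Some (mat2 (- 2*M - 1 - 2*i) 0 0 (2*i - 4*M) r c) else None)
      else if d \<le> 2*T then
        (let x = 8*M + 1 + 4*(int (d - 3)*M + i) in Some ((-1)^Suc d * mat2 x (- x - 1) (- x - 2) (x + 3) r c))
      else None)"

lemma heffter_block_eq_None_iff:
  "1 \<le> T \<Longrightarrow> heffter_block m T I d r c = None \<longleftrightarrow> 2*T < d \<or> (d = 2 \<and> r \<noteq> c)"
  by (auto simp: heffter_block_def Let_def)

lemma sum_alternating_sign_tail:
  fixes e :: int
  shows "(\<Sum>d = 3..2*T. (-1)^Suc d * e) = 0"
proof -
  have "(\<Sum>d = 3..2*T. (-1)^Suc d * e) = - ((\<Sum>d = Suc (2*1)..2*T. (-1)^d) * e)"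
    by (simp add: sum_distrib_right sum_negf)
  then show ?thesis by (simp only: sum_neg_one_power_odd_even)
qed

lemma heffter_block_tail:
  assumes "3 \<le> d" "d \<le> 2*T"
  shows "heffter_block m T I d r c =
    (let x = 8 * int m + 1 + 4 * (int (d - 3) * int m + int I)
     in Some ((-1)^Suc d * mat2 x (- x - 1) (- x - 2) (x + 3) r c))"
  using assms by (simp add: heffter_block_def Let_def)

lemma sum_heffter_block_support:
  fixes T m a :: nat
  assumes "1 \<le> T" "2*T < m" "a < 2"
    and support: "\<And>d b. P d b \<longleftrightarrow> d \<le> 2*T \<and> (d = 2 \<longrightarrow> b = a)"
  shows "(\<Sum>d<m. \<Sum>b<2. if P d b then 1 else 0) = 4*T + (1::nat)"
proof -
  let ?count = "\<lambda>d. \<Sum>b<2. if P d b then 1 else (0::nat)"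
  have "(\<Sum>d<m. ?count d) = (\<Sum>d<3. ?count d) + (\<Sum>d = 3..2*T. ?count d)"
    by (rule sum_lessThan_split_ivl) (use assms in auto)
  also have "(\<Sum>d<3. ?count d) = 5"
    using assms by (auto simp: eval_nat_numeral)
  also have "(\<Sum>d = 3..2*T. ?count d) = (\<Sum>d = 3..2*T. 2)"
    using assms by (intro sum.cong) (auto simp: eval_nat_numeral)
  finally show ?thesis using assms(1) by simp
qed

lemma heffter_block_row_sum:
  assumes "1 \<le> T" "2*T < m" "r < 2"
  shows "(\<Sum>d<m. \<Sum>c<2. if heffter_block m T I d r c \<noteq> None then the (heffter_block m T I d r c) else 0)
       = (if r = 0 then - (2 * int (2*m*(4*T+1)) + 1) else 0)"
proof -
  let ?row = "\<lambda>d. \<Sum>c<2. if heffter_block m T I d r c \<noteq> None then the (heffter_block m T I d r c) else 0"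
  have "(\<Sum>d<m. ?row d) = (\<Sum>d<3. ?row d) + (\<Sum>d = 3..2*T. ?row d)"
    by (rule sum_lessThan_split_ivl) (use assms in \<open>auto simp: heffter_block_eq_None_iff\<close>)
  also have "(\<Sum>d = 3..2*T. ?row d) = (\<Sum>d = 3..2*T. (-1)^Suc d * (if r = 0 then -1 else 1))"
    using assms by (intro sum.cong) (auto simp: heffter_block_tail Let_def mat2_def eval_nat_numeral algebra_simps)
  also have "(\<Sum>d<3. ?row d) = (if r = 0 then - (2 * int (2*m*(4*T+1)) + 1) else 0)"
    using assms by (auto simp: heffter_block_def Let_def mat2_def eval_nat_numeral)
  finally show ?thesis by (simp only: sum_alternating_sign_tail)
qed

lemma heffter_block_col_sum:
  assumes "1 \<le> T" "2*T < m" "J < m" "c < 2"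
  shows "(\<Sum>d<m. \<Sum>r<2. if heffter_block m T ((J + m - d) mod m) d r c \<noteq> None
                       then the (heffter_block m T ((J + m - d) mod m) d r c) else 0)
       = (if c = 0 then - (2 * int (2*m*(4*T+1)) + 1) else 0)"
proof -
  let ?col = "\<lambda>d. \<Sum>r<2. if heffter_block m T ((J + m - d) mod m) d r c \<noteq> None
                       then the (heffter_block m T ((J + m - d) mod m) d r c) else 0"
  have "(\<Sum>d<m. ?col d) = (\<Sum>d<3. ?col d) + (\<Sum>d = 3..2*T. ?col d)"
    by (rule sum_lessThan_split_ivl) (use assms in \<open>auto simp: heffter_block_eq_None_iff\<close>)
  also have "(\<Sum>d = 3..2*T. ?col d) = (\<Sum>d = 3..2*T. (-1)^Suc d * (if c = 0 then -2 else 2))"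
    using assms by (intro sum.cong) (auto simp: heffter_block_tail Let_def mat2_def eval_nat_numeral algebra_simps)
  also have "(\<Sum>d<3. ?col d) = (if c = 0 then - (2 * int (2*m*(4*T+1)) + 1) else 0)"
    \<comment> \<open>diagonals 1 and 2 of block column J lie in block rows J - 1 and J - 2\<close>
    using assms mod_pred_pred[of m J]
    by (auto simp: heffter_block_def Let_def mat2_def eval_nat_numeral)
  finally show ?thesis by (simp only: sum_alternating_sign_tail)
qed

definition heffter_block_attains :: "nat \<Rightarrow> nat \<Rightarrow> int \<Rightarrow> bool" where
  "heffter_block_attains m T x \<longleftrightarrow>
     (\<exists>I<m. \<exists>d<m. \<exists>r<2. \<exists>c<2. \<exists>v. heffter_block m T I d r c = Some v \<and> \<bar>v\<bar> = x)"

lemma heffter_block_attainsI: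
  "I < m \<Longrightarrow> d < m \<Longrightarrow> r < 2 \<Longrightarrow> c < 2 \<Longrightarrow> heffter_block m T I d r c = Some v \<Longrightarrow> \<bar>v\<bar> = x
   \<Longrightarrow> heffter_block_attains m T x"
  unfolding heffter_block_attains_def by blast

lemma heffter_block_attains_signedI:
  assumes "I < m" "d < m" "r < 2" "c < 2" "heffter_block m T I d r c = Some v" "v = x \<or> v = - x" "0 \<le> x"
  shows "heffter_block_attains m T x"
  using assms(6,7) by (intro heffter_block_attainsI[OF assms(1-5)]) auto

lemma heffter_block_diag0:
  "heffter_block m T I 0 r c =
     Some (mat2 (int I - int (2*m*(4*T+1))) (int I - 5 * int m) (8 * int m - int I) (int m - int I) r c)"
  by (simp add: heffter_block_def Let_def)

lemma heffter_block_diag1: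
  assumes "(I + m - 1) mod m = u"
  shows "heffter_block m T I 1 r c =
     Some (mat2 (int u + int m - int (2*m*(4*T+1))) (6 * int m - int u) (int u - 7 * int m) (2 * int m - int u) r c)"
  using assms by (simp add: heffter_block_def Let_def)

lemma heffter_block_diag2:
  "heffter_block m T I 2 r r = Some (mat2 (- 2 * int m - 1 - 2 * int I) 0 0 (2 * int I - 4 * int m) r r)"
  by (simp add: heffter_block_def Let_def)

lemma abs_alternating_mat2:
  assumes "0 \<le> x" "r < 2" "c < 2"
  shows "\<bar>(-1)^n * mat2 x (- x - 1) (- x - 2) (x + 3) r c\<bar> = x + int (2*r + c)"
  using assms by (auto simp: abs_mult mat2_def eval_nat_numeral less_Suc_eq)

lemma heffter_block_attains_tail:
  assumes "1 \<le> T" "2*T < m" "8 * int m < x" "x \<le> 8 * int T * int m"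
  shows "heffter_block_attains m T x"
proof -
  define y where "y = nat (x - 8 * int m - 1)"
  define q where "q = y div 4"
  have m: "0 < m" using assms by simp
  have y: "x = 8 * int m + 1 + int y" using assms by (simp add: y_def)
  have "int y < (8 * int T - 8) * int m" using assms by (simp add: y_def algebra_simps)
  also have "\<dots> = int ((8*T - 8) * m)" using assms(1) by (simp add: of_nat_diff)
  finally have "y < (8*T - 8) * m" by (simp only: of_nat_less_iff)
  also have "(8*T - 8) * m = (2*T - 2) * m * 4" by (simp add: diff_mult_distrib)
  finally have "q < (2*T - 2) * m" unfolding q_def by (rule less_mult_imp_div_less)
  then have "q div m < 2*T - 2" by (rule less_mult_imp_div_less)
  then have d: "q div m + 3 \<le> 2*T" "q div m + 3 < m" using assms(2) by linarith+
  \<comment> \<open>the witness comes from writing x - 8m - 1 = 4((d - 3)m + I) + (2r + c)\<close>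
  let ?d = "q div m + 3" and ?I = "q mod m" and ?r = "y mod 4 div 2" and ?c = "y mod 2"
  have "y = 4 * (q div m * m + q mod m) + (2 * ?r + ?c)"
    unfolding q_def by (simp add: mod_mult2_eq) presburger
  then have y_int: "int y = 4 * (int (q div m) * int m + int ?I) + int (2 * ?r + ?c)"
    by (metis of_nat_add of_nat_mult of_nat_numeral)
  define X where "X = 8 * int m + 1 + 4 * (int (?d - 3) * int m + int ?I)"
  have x: "x = X + int (2 * ?r + ?c)" unfolding X_def y using y_int by simp
  have "heffter_block m T ?I ?d ?r ?c = Some ((-1)^Suc ?d * mat2 X (- X - 1) (- X - 2) (X + 3) ?r ?c)"
    using d by (simp add: heffter_block_tail X_def Let_def)
  moreover have "\<bar>(-1)^Suc ?d * mat2 X (- X - 1) (- X - 2) (X + 3) ?r ?c\<bar> = x"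
    unfolding x by (rule abs_alternating_mat2) (simp_all add: X_def)
  ultimately show ?thesis using d m by (intro heffter_block_attainsI) auto
qed

lemma heffter_block_attains_low:
  assumes "3 \<le> m" "1 \<le> x" "x \<le> 8 * int m"
  shows "heffter_block_attains m T x"
proof -
  consider "x \<le> int m" | "int m < x" "x \<le> 2 * int m" | "2 * int m < x" "x \<le> 4 * int m" "odd x"
    | "2 * int m < x" "x \<le> 4 * int m" "even x" | "4 * int m < x" "x \<le> 5 * int m"
    | "5 * int m < x" "x \<le> 6 * int m" | "6 * int m < x" "x \<le> 7 * int m" | "7 * int m < x"
    using assms(3) by linarith
  then show ?thesis
  proof cases
    case 1
    then obtain I where I: "I < m" "x = 1 * int m - int I" using exists_lessThan_diff[of 1 m x] assms by auto
    then have block: "heffter_block m T I 0 1 1 = Some x" by (simp add: heffter_block_diag0 mat2_def)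
    show ?thesis by (rule heffter_block_attains_signedI[OF I(1) _ _ _ block]) (use assms in simp_all)
  next
    case 2
    then obtain u where "u < m" "x = 2 * int m - int u" using exists_lessThan_diff[of 2 m x] by auto
    moreover obtain I where I: "I < m" "(I + m - 1) mod m = u" using exists_mod_pred[OF \<open>u < m\<close>] .
    ultimately have block: "heffter_block m T I 1 1 1 = Some x"
      unfolding heffter_block_diag1[OF I(2)] by (simp add: mat2_def)
    show ?thesis by (rule heffter_block_attains_signedI[OF I(1) _ _ _ block]) (use assms in simp_all)
  next
    case 3
    define I where "I = nat ((x - 2 * int m - 1) div 2)"
    have I: "I < m" "x = 2 * int m + 1 + 2 * int I" using 3 by (auto simp: I_def elim!: oddE)
    then have block: "heffter_block m T I 2 0 0 = Some (- x)" by (simp add: heffter_block_diag2 mat2_def)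
    show ?thesis by (rule heffter_block_attains_signedI[OF I(1) _ _ _ block]) (use assms in simp_all)
  next
    case 4
    define I where "I = nat ((4 * int m - x) div 2)"
    have I: "I < m" "x = 4 * int m - 2 * int I" using 4 by (auto simp: I_def elim!: evenE)
    then have block: "heffter_block m T I 2 1 1 = Some (- x)" by (simp add: heffter_block_diag2 mat2_def)
    show ?thesis by (rule heffter_block_attains_signedI[OF I(1) _ _ _ block]) (use assms in simp_all)
  next
    case 5
    then obtain I where I: "I < m" "x = 5 * int m - int I" using exists_lessThan_diff[of 5 m x] by auto
    then have block: "heffter_block m T I 0 0 1 = Some (- x)" by (simp add: heffter_block_diag0 mat2_def)
    show ?thesis by (rule heffter_block_attains_signedI[OF I(1) _ _ _ block]) (use assms in simp_all)
  next
    case 6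
    then obtain u where "u < m" "x = 6 * int m - int u" using exists_lessThan_diff[of 6 m x] by auto
    moreover obtain I where I: "I < m" "(I + m - 1) mod m = u" using exists_mod_pred[OF \<open>u < m\<close>] .
    ultimately have block: "heffter_block m T I 1 0 1 = Some x"
      unfolding heffter_block_diag1[OF I(2)] by (simp add: mat2_def)
    show ?thesis by (rule heffter_block_attains_signedI[OF I(1) _ _ _ block]) (use assms in simp_all)
  next
    case 7
    then obtain u where "u < m" "x = 7 * int m - int u" using exists_lessThan_diff[of 7 m x] by auto
    moreover obtain I where I: "I < m" "(I + m - 1) mod m = u" using exists_mod_pred[OF \<open>u < m\<close>] .
    ultimately have block: "heffter_block m T I 1 1 0 = Some (- x)"
      unfolding heffter_block_diag1[OF I(2)] by (simp add: mat2_def)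
    show ?thesis by (rule heffter_block_attains_signedI[OF I(1) _ _ _ block]) (use assms in simp_all)
  next
    case 8
    then obtain I where I: "I < m" "x = 8 * int m - int I" using exists_lessThan_diff[of 8 m x] assms by auto
    then have block: "heffter_block m T I 0 1 0 = Some x" by (simp add: heffter_block_diag0 mat2_def)
    show ?thesis by (rule heffter_block_attains_signedI[OF I(1) _ _ _ block]) (use assms in simp_all)
  qed
qed

lemma heffter_block_attains_high:
  assumes "3 \<le> m" "8 * int T * int m < x" "x \<le> int (2*m*(4*T+1))"
  shows "heffter_block_attains m T x"
proof -
  define K where "K = 8 * int T * int m"
  have N: "int (2*m*(4*T+1)) = K + 2 * int m" by (simp add: K_def algebra_simps)
  have "0 \<le> K" "K < x" using assms(2) by (simp_all add: K_def)
  consider "x \<le> K + int m" | "K + int m < x"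
    by linarith
  then show ?thesis
  proof cases
    case 1
    define u where "u = nat (K + int m - x)"
    have "u < m" "x = K + int m - int u" using 1 \<open>K < x\<close> by (auto simp: u_def)
    moreover obtain I where I: "I < m" "(I + m - 1) mod m = u" using exists_mod_pred[OF \<open>u < m\<close>] .
    ultimately have block: "heffter_block m T I 1 0 0 = Some (- x)"
      unfolding heffter_block_diag1[OF I(2)] N by (simp add: mat2_def)
    show ?thesis
      by (rule heffter_block_attains_signedI[OF I(1) _ _ _ block]) (use \<open>0 \<le> K\<close> \<open>K < x\<close> assms(1) in simp_all)
  next
    case 2
    define I where "I = nat (K + 2 * int m - x)"
    have I: "I < m" "x = K + 2 * int m - int I" using 2 assms(3) N by (auto simp: I_def)
    then have block: "heffter_block m T I 0 0 0 = Some (- x)" unfolding heffter_block_diag0 N by (simp add: mat2_def)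
    show ?thesis
      by (rule heffter_block_attains_signedI[OF I(1) _ _ _ block]) (use \<open>0 \<le> K\<close> \<open>K < x\<close> assms(1) in simp_all)
  qed
qed

lemma heffter_block_attains_all:
  assumes "1 \<le> T" "2*T < m" "1 \<le> x" "x \<le> int (2*m*(4*T+1))"
  shows "heffter_block_attains m T x"
proof -
  have "3 \<le> m" using assms by simp
  consider "x \<le> 8 * int m" | "8 * int m < x" "x \<le> 8 * int T * int m" | "8 * int T * int m < x"
    by linarith
  then show ?thesis
  proof cases
    case 1
    then show ?thesis using assms \<open>3 \<le> m\<close> by (intro heffter_block_attains_low)
  next
    case 2
    then show ?thesis using assms by (intro heffter_block_attains_tail)
  next
    case 3
    then show ?thesis using assms \<open>3 \<le> m\<close> by (intro heffter_block_attains_high)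
  qed
qed

lemma heffter_block_circulant_row:
  assumes "1 \<le> T" "2*T < m" "i < 2*m"
  defines "A \<equiv> block_circulant 2 m (heffter_block m T)"
  shows "card {j. j < 2*m \<and> A i j \<noteq> None} = 4*T + 1"
    and "(\<Sum>j\<in>{j. j < 2*m \<and> A i j \<noteq> None}. the (A i j)) mod (2 * int (2*m) * int (4*T + 1) + 1) = 0"
proof -
  let ?B = "heffter_block m T (i div 2)" and ?r = "i mod 2"
  have "card {j. j < 2*m \<and> A i j \<noteq> None} = (\<Sum>j<2*m. if A i j \<noteq> None then 1 else 0)"
    by (rule card_filter_lessThan)
  also have "\<dots> = (\<Sum>d<m. \<Sum>c<2. if ?B d ?r c \<noteq> None then 1 else 0)"
    using sum_block_circulant_row[OF assms(3), of "\<lambda>v. if v \<noteq> None then 1 else 0"] by (simp add: A_def)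
  also have "\<dots> = 4*T + 1"
    using assms(1,2) by (intro sum_heffter_block_support[where a = ?r]) (auto simp: heffter_block_eq_None_iff)
  finally show "card {j. j < 2*m \<and> A i j \<noteq> None} = 4*T + 1" .
  have "(\<Sum>j\<in>{j. j < 2*m \<and> A i j \<noteq> None}. the (A i j))
      = (\<Sum>d<m. \<Sum>c<2. if ?B d ?r c \<noteq> None then the (?B d ?r c) else 0)"
    using sum_block_circulant_row[OF assms(3), of "\<lambda>v. if v \<noteq> None then the v else 0"]
    by (simp add: A_def sum_filter_lessThan)
  also have "\<dots> = (if ?r = 0 then - (2 * int (2*m*(4*T+1)) + 1) else 0)"
    using assms(1,2) by (intro heffter_block_row_sum) simp_all
  finally show "(\<Sum>j\<in>{j. j < 2*m \<and> A i j \<noteq> None}. the (A i j)) mod (2 * int (2*m) * int (4*T + 1) + 1) = 0"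
    by (simp only: of_nat_mult mult.assoc if_neg_mod_self)
qed

lemma heffter_block_circulant_col:
  assumes "1 \<le> T" "2*T < m" "j < 2*m"
  defines "A \<equiv> block_circulant 2 m (heffter_block m T)"
  shows "card {i. i < 2*m \<and> A i j \<noteq> None} = 4*T + 1"
    and "(\<Sum>i\<in>{i. i < 2*m \<and> A i j \<noteq> None}. the (A i j)) mod (2 * int (2*m) * int (4*T + 1) + 1) = 0"
proof -
  let ?B = "\<lambda>d. heffter_block m T ((j div 2 + m - d) mod m) d" and ?c = "j mod 2"
  have "card {i. i < 2*m \<and> A i j \<noteq> None} = (\<Sum>i<2*m. if A i j \<noteq> None then 1 else 0)"
    by (rule card_filter_lessThan)
  also have "\<dots> = (\<Sum>d<m. \<Sum>r<2. if ?B d r ?c \<noteq> None then 1 else 0)"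
    using sum_block_circulant_col[OF assms(3), of "\<lambda>v. if v \<noteq> None then 1 else 0"] by (simp add: A_def)
  also have "\<dots> = 4*T + 1"
    using assms(1,2) by (intro sum_heffter_block_support[where a = ?c]) (auto simp: heffter_block_eq_None_iff)
  finally show "card {i. i < 2*m \<and> A i j \<noteq> None} = 4*T + 1" .
  have "(\<Sum>i\<in>{i. i < 2*m \<and> A i j \<noteq> None}. the (A i j))
      = (\<Sum>d<m. \<Sum>r<2. if ?B d r ?c \<noteq> None then the (?B d r ?c) else 0)"
    using sum_block_circulant_col[OF assms(3), of "\<lambda>v. if v \<noteq> None then the v else 0"]
    by (simp add: A_def sum_filter_lessThan)
  also have "\<dots> = (if ?c = 0 then - (2 * int (2*m*(4*T+1)) + 1) else 0)"
    using assms(1-3) by (intro heffter_block_col_sum) simp_all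
  finally show "(\<Sum>i\<in>{i. i < 2*m \<and> A i j \<noteq> None}. the (A i j)) mod (2 * int (2*m) * int (4*T + 1) + 1) = 0"
    by (simp only: of_nat_mult mult.assoc if_neg_mod_self)
qed

lemma heffter_block_circulant_covers:
  assumes "1 \<le> T" "2*T < m" "1 \<le> x" "x \<le> int (2*m) * int (4*T + 1)"
  shows "\<exists>i<2*m. \<exists>j<2*m. \<exists>v. block_circulant 2 m (heffter_block m T) i j = Some v \<and> \<bar>v\<bar> = x"
proof -
  have "heffter_block_attains m T x"
    using assms by (intro heffter_block_attains_all) (simp_all add: algebra_simps)
  then obtain I d r c v
    where block: "I < m" "d < m" "r < 2" "c < 2" "heffter_block m T I d r c = Some v" "\<bar>v\<bar> = x"
    unfolding heffter_block_attains_def by blast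
  then have "block_circulant 2 m (heffter_block m T) (2*I + r) (2*((I + d) mod m) + c) = Some v"
    by (simp add: block_circulant_block)
  moreover have "2*I + r < 2*m" "2*((I + d) mod m) + c < 2*m"
    using block by (simp_all add: mult_block_less)
  ultimately show ?thesis using block by blast
qed

lemma heffter_block_circulant:
  assumes "1 \<le> T" "2*T < m"
  shows "heffter (2*m) (4*T + 1) (block_circulant 2 m (heffter_block m T))"
  by (rule heffterI[OF _ heffter_block_circulant_row(1)[OF assms] heffter_block_circulant_col(1)[OF assms]
        heffter_block_circulant_row(2)[OF assms] heffter_block_circulant_col(2)[OF assms]
        heffter_block_circulant_covers[OF assms]])
    (auto simp: block_circulant_def)

theorem theorem7p2:
  fixes n k :: nat
  assumes "n mod 4 = 2" and "n \<ge> 6" and "k mod 4 = 1" and "5 \<le> k" and "k < n"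
  shows "\<exists>A. heffter n k A"
proof -
  define m where "m = n div 2"
  define T where "T = k div 4"
  have n: "n = 2*m" and k: "k = 4*T + 1"
    using assms(1,3) unfolding m_def T_def by presburger+
  have "1 \<le> T" "2*T < m"
    using assms(4,5) unfolding n k by simp_all
  then have "heffter (2*m) (4*T + 1) (block_circulant 2 m (heffter_block m T))"
    by (rule heffter_block_circulant)
  then show ?thesis unfolding n k by blast
qed

end
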